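(* Let $S$ and $T$ be multisets with no element in common, and let $\pi$ be a multiset partition of $S$ and $\tau$ a multiset partition of $T$. Then \[ \tilde h_{\tilde m(\pi)}\,\tilde h_{\tilde m(\tau)}=\sum_{\theta\in\pi\#\tau}\tilde h_{\tilde m(\theta)}. \]
   Context: A multiset partition of a multiset $S$ is a multiset of nonempty multisets whose multiset union is $S$; for such $\pi$, $\tilde m(\pi)$ is the partition whose parts are the multiplicities of the distinct multisets in $\pi$. For a multiset $A$ and set $U$, $A|_U$ is the multiset of elements of $A$ lying in $U$; for a multiset partition $\theta$, $\theta|_U$ is the multiset of the $A|_U$, $A\in\theta$, with empty multisets discarded. $\pi\#\tau$ is the set of multiset partitions $\theta$ of $S\uplus T$ with $\theta|_S=\pi$ and $\theta|_T=\tau$ (restricting to the underlying sets of $S$ and $T$). $Sym=\mathbb{Q}[p_1,p_2,\ldots]$; the induced trivial character basis $\{\tilde h_\lambda\}$ is determined recursively by $h_\lambda=\sum_\sigma\tilde h_{\tilde m(\sigma)}$, the sum over all multiset partitions $\sigma$ of $\{\!\!\{1^{\lambda_1},\ldots,\ell(\lambda)^{\lambda_{\ell(\lambda)}}\}\!\!\}$. *)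

theory Defs
  imports Complex_Main "HOL-Library.Multiset" "HOL-Library.Poly_Mapping"
begin

text \<open>Polynomials in countably many variables over the rationals: finitely supported
  maps from monomials (finitely supported exponent vectors) to coefficients.
  The variable with index i (i >= 1) is the power sum p_i; index 0 is never used.\<close>

type_synonym sym = "(nat \<Rightarrow>\<^sub>0 nat) \<Rightarrow>\<^sub>0 rat"

definition psym :: "nat \<Rightarrow> sym" where
  "psym i = Poly_Mapping.single (Poly_Mapping.single i 1) 1"

definition is_partition :: "nat multiset \<Rightarrow> bool" where
  "is_partition lam \<longleftrightarrow> (\<forall>i\<in>#lam. 0 < i)"

definition partitions_of :: "nat \<Rightarrow> nat multiset set" where
  "partitions_of n = {\<mu>. is_partition \<mu> \<and> sum_mset \<mu> = n}"

definition zee :: "nat multiset \<Rightarrow> nat" where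
  "zee \<mu> = (\<Prod>i\<in>set_mset \<mu>. i ^ count \<mu> i * fact (count \<mu> i))"

definition p_part :: "nat multiset \<Rightarrow> sym" where
  "p_part \<mu> = (\<Prod>i\<in>#\<mu>. psym i)"

definition hsym :: "nat \<Rightarrow> sym" where
  "hsym n = (\<Sum>\<mu>\<in>partitions_of n. Poly_Mapping.single 0 (1 / of_nat (zee \<mu>)) * p_part \<mu>)"

definition h_part :: "nat multiset \<Rightarrow> sym" where
  "h_part lam = (\<Prod>i\<in>#lam. hsym i)"

definition is_mset_partition :: "'a multiset multiset \<Rightarrow> 'a multiset \<Rightarrow> bool" where
  "is_mset_partition \<sigma> S \<longleftrightarrow> (\<forall>A\<in>#\<sigma>. A \<noteq> {#}) \<and> sum_mset \<sigma> = S"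

definition mset_partitions :: "'a multiset \<Rightarrow> 'a multiset multiset set" where
  "mset_partitions S = {\<sigma>. is_mset_partition \<sigma> S}"

definition mtilde :: "'a multiset multiset \<Rightarrow> nat multiset" where
  "mtilde \<sigma> = image_mset (\<lambda>A. count \<sigma> A) (mset_set (set_mset \<sigma>))"

definition restr :: "'a multiset \<Rightarrow> 'a set \<Rightarrow> 'a multiset" where
  "restr A U = filter_mset (\<lambda>x. x \<in> U) A"

definition restr_part :: "'a multiset multiset \<Rightarrow> 'a set \<Rightarrow> 'a multiset multiset" where
  "restr_part \<theta> U = filter_mset (\<lambda>B. B \<noteq> {#}) (image_mset (\<lambda>A. restr A U) \<theta>)"

definition sharp :: "'a multiset \<Rightarrow> 'a multiset \<Rightarrow> 'a multiset multiset \<Rightarrow> 'a multiset multiset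
    \<Rightarrow> 'a multiset multiset set" where
  "sharp S T \<pi> \<tau> = {\<theta>. is_mset_partition \<theta> (S + T)
       \<and> restr_part \<theta> (set_mset S) = \<pi> \<and> restr_part \<theta> (set_mset T) = \<tau>}"

text \<open>For a partition lambda (with parts listed in some order as lambda_1, ..., lambda_l),
  the multiset {1^lambda_1, ..., l^lambda_l}.  Labels start at 0 here; relabelling is immaterial.\<close>

definition base_mset :: "nat multiset \<Rightarrow> nat multiset" where
  "base_mset lam = (let xs = sorted_list_of_multiset lam in
      (\<Sum>i<length xs. replicate_mset (xs ! i) i))"

text \<open>ht is (a candidate for) the basis h-tilde: it satisfies the defining relations
  h_lambda = sum over multiset partitions sigma of base(lambda) of ht(m-tilde sigma),
  for every partition lambda.  These relations determine ht on partitions.\<close>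

definition is_htilde :: "(nat multiset \<Rightarrow> sym) \<Rightarrow> bool" where
  "is_htilde ht \<longleftrightarrow> (\<forall>lam. is_partition lam \<longrightarrow>
      h_part lam = (\<Sum>\<sigma>\<in>mset_partitions (base_mset lam). ht (mtilde \<sigma>)))"

end

theory Submission
  imports Defs
begin

text \<open>Write F(X) for the sum of ht (mtilde sigma) over all multiset partitions sigma of X.
  Relabelling X to base_mset shows F(X) = h of the multiplicities of X, so F(X + Y) = F(X) F(Y)
  for disjoint X, Y. Grouping the partitions of X + Y by their restrictions to X and Y turns this
  into a sum, over all pairs (rho, kappa) of partitions of X and Y, of the differences between the
  two sides of the claimed identity for (rho, kappa); hence that sum vanishes.

  Now give every block of pi and tau its own natural-number label, and let X and Y be the
  multisets of labels of the blocks of pi and tau. Replacing labels by their blocks is a bijection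
  between the partitions in (singletons X) # (singletons Y) and pi # tau that preserves mtilde,
  so the identity for (pi, tau) is the identity for the pair of singleton partitions of X and Y.
  Every other pair of partitions of X and Y has fewer blocks in total and satisfies the identity
  by induction, so the vanishing sum forces the remaining term to vanish as well.\<close>

lemma count_image_mset_inj_on:
  assumes "inj_on f (set_mset M)" "x \<in># M"
  shows "count (image_mset f M) (f x) = count M x"
proof -
  have "f -` {f x} \<inter> set_mset M = {x}" using assms by (auto dest: inj_onD)
  thus ?thesis by (simp add: count_image_mset)
qed

lemma mtilde_image_mset:
  assumes "inj_on f (set_mset \<sigma>)"
  shows "mtilde (image_mset f \<sigma>) = mtilde \<sigma>"
proof -
  have "mset_set (f ` set_mset \<sigma>) = image_mset f (mset_set (set_mset \<sigma>))"
    using assms by (simp add: image_mset_mset_set)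
  thus ?thesis
    by (auto simp: mtilde_def multiset.map_comp intro!: image_mset_cong count_image_mset_inj_on[OF assms])
qed

lemma mem_mset_partitions:
  "\<sigma> \<in> mset_partitions X \<longleftrightarrow> (\<forall>A\<in>#\<sigma>. A \<noteq> {#}) \<and> sum_mset \<sigma> = X"
  by (simp add: mset_partitions_def is_mset_partition_def)

lemma mset_partitions_block_subseteq:
  assumes "\<sigma> \<in> mset_partitions X" "A \<in># \<sigma>"
  shows "A \<subseteq># X"
  using assms by (metis mem_mset_partitions mset_subset_eq_add_left sum_mset.remove)

lemma size_le_size_sum_mset:
  assumes "\<forall>A\<in>#\<sigma>. A \<noteq> {#}"
  shows "size \<sigma> \<le> size (sum_mset \<sigma>)"
  using assms
proof (induction \<sigma>)
  case (add A \<sigma>)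
  thus ?case by (cases A) auto
qed simp

lemma finite_mset_partitions: "finite (mset_partitions X)"
proof -
  let ?bounded = "\<lambda>U n. {M. set_mset M \<subseteq> U \<and> size M \<le> n}"
  have fin: "finite (?bounded U n)" if "finite U" for U :: "'b set" and n
  proof -
    have "?bounded U n = (\<Union>k\<le>n. multisets_of_size U k)"
      by (auto simp: multisets_of_size_def)
    thus ?thesis using that by auto
  qed
  have "mset_partitions X \<subseteq> ?bounded (?bounded (set_mset X) (size X)) (size X)"
  proof
    fix \<sigma> assume \<sigma>: "\<sigma> \<in> mset_partitions X"
    hence "set_mset \<sigma> \<subseteq> ?bounded (set_mset X) (size X)"
      by (fastforce dest: mset_partitions_block_subseteq set_mset_mono size_mset_mono)
    moreover have "size \<sigma> \<le> size X"
      using \<sigma> size_le_size_sum_mset by (auto simp: mem_mset_partitions)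
    ultimately show "\<sigma> \<in> ?bounded (?bounded (set_mset X) (size X)) (size X)" by simp
  qed
  thus ?thesis by (rule finite_subset) (intro fin finite_set_mset)
qed

lemma image_mset_sum_mset: "image_mset g (sum_mset \<sigma>) = sum_mset (image_mset (image_mset g) \<sigma>)"
  by (induction \<sigma>) auto

lemma image_mset_in_mset_partitions:
  "\<sigma> \<in> mset_partitions X \<Longrightarrow> image_mset (image_mset g) \<sigma> \<in> mset_partitions (image_mset g X)"
  by (auto simp: mem_mset_partitions image_mset_sum_mset)

lemma image_mset_inv_into:
  assumes "inj_on g U" "set_mset A \<subseteq> U"
  shows "image_mset (inv_into U g) (image_mset g A) = A"
  using assms by (induction A) auto

lemma image_mset_f_inv_into:
  assumes "set_mset A \<subseteq> g ` U"
  shows "image_mset g (image_mset (inv_into U g) A) = A"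
  using assms by (induction A) (auto simp: f_inv_into_f)

lemma bij_betw_image_mset_mset_partitions:
  assumes "inj_on g (set_mset X)"
  shows "bij_betw (image_mset (image_mset g)) (mset_partitions X) (mset_partitions (image_mset g X))"
proof -
  let ?h = "inv_into (set_mset X) g"
  have blocks: "set_mset A \<subseteq> set_mset Y" if "\<sigma> \<in> mset_partitions Y" "A \<in># \<sigma>" for \<sigma> A and Y :: "'c multiset"
    using mset_partitions_block_subseteq[OF that] by (rule set_mset_mono)
  show ?thesis
  proof (rule bij_betw_byWitness[where f'="image_mset (image_mset ?h)"])
    show "\<forall>\<sigma>\<in>mset_partitions X. image_mset (image_mset ?h) (image_mset (image_mset g) \<sigma>) = \<sigma>"
    proof
      fix \<sigma> assume \<sigma>: "\<sigma> \<in> mset_partitions X"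
      have "image_mset (image_mset ?h \<circ> image_mset g) \<sigma> = image_mset id \<sigma>"
        by (rule image_mset_cong) (simp add: image_mset_inv_into[OF assms blocks[OF \<sigma>]])
      thus "image_mset (image_mset ?h) (image_mset (image_mset g) \<sigma>) = \<sigma>"
        by (simp add: multiset.map_comp)
    qed
    show "\<forall>\<sigma>\<in>mset_partitions (image_mset g X). image_mset (image_mset g) (image_mset (image_mset ?h) \<sigma>) = \<sigma>"
    proof
      fix \<sigma> assume \<sigma>: "\<sigma> \<in> mset_partitions (image_mset g X)"
      have "image_mset (image_mset g \<circ> image_mset ?h) \<sigma> = image_mset id \<sigma>"
        using blocks[OF \<sigma>] by (intro image_mset_cong) (simp add: image_mset_f_inv_into)
      thus "image_mset (image_mset g) (image_mset (image_mset ?h) \<sigma>) = \<sigma>"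
        by (simp add: multiset.map_comp)
    qed
    show "image_mset (image_mset g) ` mset_partitions X \<subseteq> mset_partitions (image_mset g X)"
      by (auto intro: image_mset_in_mset_partitions)
    show "image_mset (image_mset ?h) ` mset_partitions (image_mset g X) \<subseteq> mset_partitions X"
      using image_mset_in_mset_partitions[of _ "image_mset g X" ?h] assms
      by (auto simp: image_mset_inv_into)
  qed
qed

definition htilde_sum :: "(nat multiset \<Rightarrow> sym) \<Rightarrow> 'a multiset \<Rightarrow> sym" where
  "htilde_sum ht X = (\<Sum>\<sigma>\<in>mset_partitions X. ht (mtilde \<sigma>))"

lemma htilde_sum_image_mset:
  assumes "inj_on g (set_mset X)"
  shows "htilde_sum ht (image_mset g X) = htilde_sum ht X"
proof -
  have "mtilde (image_mset (image_mset g) \<sigma>) = mtilde \<sigma>" if "\<sigma> \<in> mset_partitions X" for \<sigma>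
  proof (rule mtilde_image_mset, rule inj_onI)
    fix A B assume "A \<in># \<sigma>" "B \<in># \<sigma>" "image_mset g A = image_mset g B"
    moreover have "set_mset A \<subseteq> set_mset X" "set_mset B \<subseteq> set_mset X"
      using calculation that by (meson mset_partitions_block_subseteq set_mset_mono)+
    ultimately show "A = B"
      using image_mset_inv_into[OF assms] by metis
  qed
  thus ?thesis unfolding htilde_sum_def
    by (simp add: sum.reindex_bij_betw[OF bij_betw_image_mset_mset_partitions[OF assms], symmetric])
qed

definition multiplicities :: "'a multiset \<Rightarrow> nat multiset" where
  "multiplicities X = image_mset (count X) (mset_set (set_mset X))"

lemma is_partition_multiplicities: "is_partition (multiplicities X)"
  by (auto simp: multiplicities_def is_partition_def)

lemma multiplicities_plus:
  assumes "set_mset X \<inter> set_mset Y = {}"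
  shows "multiplicities (X + Y) = multiplicities X + multiplicities Y"
proof -
  have "mset_set (set_mset (X + Y)) = mset_set (set_mset X) + mset_set (set_mset Y)"
    using assms by (simp add: mset_set_Union)
  moreover have "image_mset (count (X + Y)) (mset_set (set_mset X)) = image_mset (count X) (mset_set (set_mset X))"
    and "image_mset (count (X + Y)) (mset_set (set_mset Y)) = image_mset (count Y) (mset_set (set_mset Y))"
    using assms by (auto intro!: image_mset_cong simp: count_eq_zero_iff)
  ultimately show ?thesis by (simp add: multiplicities_def)
qed

text \<open>Listing the distinct elements of X in order of increasing multiplicity, the i-th one is
  sent to the label i of base_mset.\<close>

lemma relabel_to_base_mset:
  fixes X :: "'a multiset"
  obtains g :: "'a \<Rightarrow> nat" where "inj_on g (set_mset X)"
    "image_mset g X = base_mset (multiplicities X)"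
proof -
  from finite_distinct_list[OF finite_set_mset[of X]]
  obtain zs where zs: "set zs = set_mset X" "distinct zs" by auto
  define ys where "ys = sort_key (count X) zs"
  define g where "g = inv_into {..<length ys} ((!) ys)"
  have ys: "set ys = set_mset X" "distinct ys" using zs by (simp_all add: ys_def)
  have "multiplicities X = mset (map (count X) zs)"
    by (simp add: multiplicities_def zs flip: mset_set_set)
  hence sorted_mults: "sorted_list_of_multiset (multiplicities X) = map (count X) ys"
    by (simp add: ys_def del: mset_map) (rule properties_for_sort; simp)
  have bij: "bij_betw ((!) ys) {..<length ys} (set_mset X)"
    using bij_betw_nth[OF ys(2) refl] ys(1) by simp
  have "bij_betw g (set_mset X) {..<length ys}"
    unfolding g_def by (rule bij_betw_inv_into[OF bij])
  hence g_inj: "inj_on g (set_mset X)" and g_range: "g ` set_mset X = {..<length ys}"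
    by (simp_all add: bij_betw_def)
  have g_nth: "g (ys ! i) = i" if "i < length ys" for i
    unfolding g_def using bij that by (simp add: bij_betw_def inv_into_f_f)
  have count_base: "count (base_mset (multiplicities X)) i = (if i < length ys then count X (ys ! i) else 0)" for i
    by (simp add: base_mset_def sorted_mults count_sum)
  have "count (image_mset g X) i = count (base_mset (multiplicities X)) i" for i
  proof (cases "i < length ys")
    case True
    hence "ys ! i \<in># X" using ys nth_mem by blast
    hence "count (image_mset g X) (g (ys ! i)) = count X (ys ! i)"
      by (rule count_image_mset_inj_on[OF g_inj])
    thus ?thesis using True by (simp add: g_nth count_base)
  next
    case False
    hence "i \<notin># image_mset g X" using g_range by auto
    thus ?thesis using False by (simp add: count_base count_eq_zero_iff)
  qed
  hence "image_mset g X = base_mset (multiplicities X)" by (rule multiset_eqI)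
  with g_inj show ?thesis by (rule that)
qed

lemma htilde_sum_eq_h_part:
  assumes "is_htilde ht"
  shows "htilde_sum ht X = h_part (multiplicities X)"
proof -
  obtain g :: "'a \<Rightarrow> nat" where g: "inj_on g (set_mset X)" "image_mset g X = base_mset (multiplicities X)"
    by (rule relabel_to_base_mset)
  have "htilde_sum ht X = htilde_sum ht (image_mset g X)"
    by (rule htilde_sum_image_mset[OF g(1), symmetric])
  also have "\<dots> = h_part (multiplicities X)"
    using assms is_partition_multiplicities[of X] by (simp add: htilde_sum_def is_htilde_def g(2))
  finally show ?thesis .
qed

lemma htilde_sum_plus:
  assumes "is_htilde ht" "set_mset X \<inter> set_mset Y = {}"
  shows "htilde_sum ht (X + Y) = htilde_sum ht X * htilde_sum ht Y"
  using assms by (simp add: htilde_sum_eq_h_part multiplicities_plus h_part_def)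

lemma restr_plus [simp]: "restr (X + Y) U = restr X U + restr Y U"
  by (simp add: restr_def)

lemma restr_empty [simp]: "restr {#} U = {#}"
  by (simp add: restr_def)

lemma restr_sum_mset: "restr (sum_mset \<sigma>) U = sum_mset (image_mset (\<lambda>A. restr A U) \<sigma>)"
  by (induction \<sigma>) auto

lemma sum_mset_image_mset_filter_mset:
  "sum_mset (image_mset f (filter_mset P Z)) = sum_mset (image_mset (\<lambda>x. if P x then f x else 0) Z)"
  by (induction Z) auto

lemma restr_id: "set_mset X \<subseteq> U \<Longrightarrow> restr X U = X"
  by (auto simp: restr_def filter_mset_eq_conv)

lemma restr_eq_empty_iff: "restr X U = {#} \<longleftrightarrow> set_mset X \<inter> U = {}"
  by (auto simp: restr_def filter_mset_eq_conv)

lemma set_mset_restr: "set_mset (restr X U) = set_mset X \<inter> U"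
  by (auto simp: restr_def)

lemma restr_split:
  assumes "set_mset X \<subseteq> U \<union> V" "U \<inter> V = {}"
  shows "X = restr X U + restr X V"
proof -
  have "restr X V = filter_mset (\<lambda>x. x \<notin> U) X"
    unfolding restr_def by (rule filter_mset_cong) (use assms in auto)
  thus ?thesis unfolding restr_def by simp
qed

lemma sum_mset_restr_part: "sum_mset (restr_part \<theta> U) = restr (sum_mset \<theta>) U"
proof -
  have "sum_mset (filter_mset (\<lambda>B. B \<noteq> {#}) M) = sum_mset M" for M :: "'a multiset multiset"
    by (induction M) auto
  thus ?thesis by (simp add: restr_part_def restr_sum_mset)
qed

lemma restr_in_restr_part: "C \<in># \<theta> \<Longrightarrow> restr C U \<noteq> {#} \<Longrightarrow> restr C U \<in># restr_part \<theta> U"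
  by (auto simp: restr_part_def)

lemma restr_part_in_mset_partitions:
  assumes "set_mset X \<inter> set_mset Y = {}" "\<theta> \<in> mset_partitions (X + Y)"
  shows "restr_part \<theta> (set_mset X) \<in> mset_partitions X"
proof -
  have "restr (X + Y) (set_mset X) = X"
    using assms(1) by (simp add: restr_id restr_eq_empty_iff inf_commute)
  moreover have "\<forall>A\<in>#restr_part \<theta> (set_mset X). A \<noteq> {#}"
    by (simp add: restr_part_def)
  ultimately show ?thesis
    using assms(2) by (simp add: mem_mset_partitions sum_mset_restr_part)
qed

lemma restr_part_image_mset:
  assumes "\<And>C. C \<in># \<theta> \<Longrightarrow> restr (f C) U = g (restr C V)"
    and "\<And>C. C \<in># \<theta> \<Longrightarrow> g (restr C V) = {#} \<longleftrightarrow> restr C V = {#}"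
  shows "restr_part (image_mset f \<theta>) U = image_mset g (restr_part \<theta> V)"
proof -
  let ?R = "image_mset (\<lambda>C. restr C V) \<theta>"
  have "image_mset (\<lambda>C. restr (f C) U) \<theta> = image_mset g ?R"
    using assms(1) by (simp add: multiset.map_comp comp_def cong: image_mset_cong)
  hence "restr_part (image_mset f \<theta>) U = filter_mset (\<lambda>X. X \<noteq> {#}) (image_mset g ?R)"
    by (simp add: restr_part_def multiset.map_comp comp_def)
  also have "\<dots> = image_mset g (filter_mset (\<lambda>X. g X \<noteq> {#}) ?R)"
    by (rule filter_mset_image_mset)
  also have "filter_mset (\<lambda>X. g X \<noteq> {#}) ?R = filter_mset (\<lambda>X. X \<noteq> {#}) ?R"
    by (rule filter_mset_cong[OF refl]) (use assms(2) in auto)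
  finally show ?thesis by (simp add: restr_part_def)
qed

lemma htilde_sum_plus_eq_sum_sharp:
  assumes "set_mset X \<inter> set_mset Y = {}"
  shows "htilde_sum ht (X + Y) = (\<Sum>(\<rho>, \<kappa>)\<in>mset_partitions X \<times> mset_partitions Y.
            \<Sum>\<theta>\<in>sharp X Y \<rho> \<kappa>. ht (mtilde \<theta>))"
proof -
  let ?restrs = "\<lambda>\<theta>. (restr_part \<theta> (set_mset X), restr_part \<theta> (set_mset Y))"
  have "?restrs \<theta> \<in> mset_partitions X \<times> mset_partitions Y" if "\<theta> \<in> mset_partitions (X + Y)" for \<theta>
    using restr_part_in_mset_partitions[OF assms that]
      restr_part_in_mset_partitions[of Y X, OF _ that[unfolded add.commute[of X]]] assms by auto
  hence "htilde_sum ht (X + Y) = (\<Sum>p\<in>mset_partitions X \<times> mset_partitions Y.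
          \<Sum>\<theta>\<in>{\<theta> \<in> mset_partitions (X + Y). ?restrs \<theta> = p}. ht (mtilde \<theta>))"
    unfolding htilde_sum_def by (intro sum.group[symmetric]) (auto simp: finite_mset_partitions)
  also have "\<dots> = (\<Sum>(\<rho>, \<kappa>)\<in>mset_partitions X \<times> mset_partitions Y.
            \<Sum>\<theta>\<in>sharp X Y \<rho> \<kappa>. ht (mtilde \<theta>))"
    by (intro sum.cong refl) (auto simp: sharp_def mset_partitions_def)
  finally show ?thesis .
qed

definition singletons :: "'a multiset \<Rightarrow> 'a multiset multiset" where
  "singletons X = image_mset (\<lambda>x. {#x#}) X"

lemma singletons_in_mset_partitions: "singletons X \<in> mset_partitions X"
  by (simp add: singletons_def mem_mset_partitions)

lemma size_mset_partition_le:
  "\<sigma> \<in> mset_partitions X \<Longrightarrow> size \<sigma> \<le> size X"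
  using size_le_size_sum_mset by (auto simp: mem_mset_partitions)

lemma size_mset_partition_eq_imp_singletons:
  assumes "\<sigma> \<in> mset_partitions X" "size \<sigma> = size X"
  shows "\<sigma> = singletons X"
proof -
  have "(\<forall>A\<in>#\<sigma>. A \<noteq> {#}) \<Longrightarrow> size \<sigma> = size (sum_mset \<sigma>) \<Longrightarrow> \<sigma> = singletons (sum_mset \<sigma>)"
  proof (induction \<sigma>)
    case (add A \<sigma>)
    have "size \<sigma> \<le> size (sum_mset \<sigma>)" "0 < size A"
      using add.prems size_le_size_sum_mset by (auto simp: nonempty_has_size)
    moreover have "Suc (size \<sigma>) = size A + size (sum_mset \<sigma>)"
      using add.prems(2) by (simp del: size_mset_sum_mset_conv)
    ultimately have "size A = 1" "size \<sigma> = size (sum_mset \<sigma>)"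
      by linarith+
    moreover obtain a where "A = {#a#}"
      using size_1_singleton_mset[OF \<open>size A = 1\<close>] ..
    ultimately show ?case using add by (simp add: singletons_def)
  qed (simp add: singletons_def)
  thus ?thesis using assms by (auto simp: mem_mset_partitions simp del: size_mset_sum_mset_conv)
qed

lemma sum_mset_singletons [simp]: "sum_mset (singletons X) = X"
  by (simp add: singletons_def)

lemma sharp_block:
  assumes "set_mset X \<inter> set_mset Y = {}" "\<theta> \<in> sharp X Y \<rho> \<kappa>" "C \<in># \<theta>"
  shows "C \<noteq> {#}"
    and "set_mset C \<subseteq> set_mset X \<union> set_mset Y"
    and "C = restr C (set_mset X) + restr C (set_mset Y)"
    and "restr C (set_mset X) = {#} \<or> restr C (set_mset X) \<in># \<rho>"
    and "restr C (set_mset Y) = {#} \<or> restr C (set_mset Y) \<in># \<kappa>"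
proof -
  have \<theta>: "\<theta> \<in> mset_partitions (X + Y)" "restr_part \<theta> (set_mset X) = \<rho>" "restr_part \<theta> (set_mset Y) = \<kappa>"
    using assms(2) by (simp_all add: sharp_def mset_partitions_def)
  show "C \<noteq> {#}" using \<theta>(1) assms(3) by (simp add: mem_mset_partitions)
  show C: "set_mset C \<subseteq> set_mset X \<union> set_mset Y"
    using set_mset_mono[OF mset_partitions_block_subseteq[OF \<theta>(1) assms(3)]] by simp
  show "C = restr C (set_mset X) + restr C (set_mset Y)"
    by (rule restr_split[OF C assms(1)])
  show "restr C (set_mset X) = {#} \<or> restr C (set_mset X) \<in># \<rho>"
    and "restr C (set_mset Y) = {#} \<or> restr C (set_mset Y) \<in># \<kappa>"
    using restr_in_restr_part[OF assms(3)] \<theta> by blast+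
qed

locale block_labelling =
  fixes S T :: "'a multiset" and \<pi> \<tau> :: "'a multiset multiset" and c :: "'a multiset \<Rightarrow> nat"
  assumes disjoint: "set_mset S \<inter> set_mset T = {}"
    and partition_S: "\<pi> \<in> mset_partitions S"
    and partition_T: "\<tau> \<in> mset_partitions T"
    and inj_c: "inj_on c (set_mset \<pi> \<union> set_mset \<tau>)"
begin

abbreviation LS :: "nat multiset" where "LS \<equiv> image_mset c \<pi>"
abbreviation LT :: "nat multiset" where "LT \<equiv> image_mset c \<tau>"

definition block :: "nat \<Rightarrow> 'a multiset" where
  "block = inv_into (set_mset \<pi> \<union> set_mset \<tau>) c"

definition expand :: "nat multiset \<Rightarrow> 'a multiset" where
  "expand Z = sum_mset (image_mset block Z)"

definition label :: "'a multiset \<Rightarrow> nat multiset" where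
  "label X = (if X = {#} then {#} else {#c X#})"

definition labels :: "'a multiset \<Rightarrow> nat multiset" where
  "labels C = label (restr C (set_mset S)) + label (restr C (set_mset T))"

lemma block_c: "X \<in># \<pi> + \<tau> \<Longrightarrow> block (c X) = X"
  unfolding block_def using inj_c by (simp add: inv_into_f_f)

lemma blocks_S: "X \<in># \<pi> \<Longrightarrow> X \<noteq> {#} \<and> set_mset X \<subseteq> set_mset S"
  using partition_S by (auto simp: mem_mset_partitions dest: mset_partitions_block_subseteq set_mset_mono)

lemma blocks_T: "X \<in># \<tau> \<Longrightarrow> X \<noteq> {#} \<and> set_mset X \<subseteq> set_mset T"
  using partition_T by (auto simp: mem_mset_partitions dest: mset_partitions_block_subseteq set_mset_mono)

lemma disjoint_labels: "set_mset LS \<inter> set_mset LT = {}"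
proof -
  have "set_mset \<pi> \<inter> set_mset \<tau> = {}"
  proof (rule ccontr)
    assume "set_mset \<pi> \<inter> set_mset \<tau> \<noteq> {}"
    then obtain X where "X \<in># \<pi>" "X \<in># \<tau>" by blast
    with blocks_S blocks_T obtain x where "x \<in># X" "x \<in># S" "x \<in># T"
      by (meson multiset_nonemptyE subsetD)
    thus False using disjoint by blast
  qed
  thus ?thesis using inj_c by (auto dest: inj_onD)
qed

lemma block_LS: "x \<in># LS \<Longrightarrow> block x \<in># \<pi> \<and> c (block x) = x"
  using block_c by auto

lemma block_LT: "x \<in># LT \<Longrightarrow> block x \<in># \<tau> \<and> c (block x) = x"
  using block_c by auto

lemma restr_block:
  assumes "x \<in># LS + LT"
  shows "restr (block x) (set_mset S) = (if x \<in># LS then block x else {#})"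
    and "restr (block x) (set_mset T) = (if x \<in># LT then block x else {#})"
proof -
  consider "x \<in># LS" "x \<notin># LT" "set_mset (block x) \<subseteq> set_mset S"
    | "x \<in># LT" "x \<notin># LS" "set_mset (block x) \<subseteq> set_mset T"
    using assms disjoint_labels block_LS blocks_S block_LT blocks_T by auto
  thus "restr (block x) (set_mset S) = (if x \<in># LS then block x else {#})"
    and "restr (block x) (set_mset T) = (if x \<in># LT then block x else {#})"
    using disjoint by (cases; auto simp: restr_id restr_eq_empty_iff)+
qed

lemma restr_expand:
  assumes "set_mset Z \<subseteq> set_mset (LS + LT)"
  shows "restr (expand Z) (set_mset S) = expand (restr Z (set_mset LS))"
    and "restr (expand Z) (set_mset T) = expand (restr Z (set_mset LT))"
proof -
  have "restr (expand Z) U = expand (restr Z (set_mset L))"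
    if "\<And>x. x \<in># Z \<Longrightarrow> restr (block x) U = (if x \<in># L then block x else {#})" for U L
  proof -
    have "restr (expand Z) U = sum_mset (image_mset (\<lambda>x. restr (block x) U) Z)"
      by (simp add: expand_def restr_sum_mset multiset.map_comp comp_def)
    also have "\<dots> = sum_mset (image_mset (\<lambda>x. if x \<in># L then block x else {#}) Z)"
      using that by (simp cong: image_mset_cong)
    finally show ?thesis
      by (simp add: expand_def restr_def sum_mset_image_mset_filter_mset)
  qed
  thus "restr (expand Z) (set_mset S) = expand (restr Z (set_mset LS))"
    and "restr (expand Z) (set_mset T) = expand (restr Z (set_mset LT))"
    using assms restr_block by (meson subsetD)+
qed

lemma expand_eq_empty_iff:
  assumes "set_mset Z \<subseteq> set_mset (LS + LT)"
  shows "expand Z = {#} \<longleftrightarrow> Z = {#}"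
proof -
  have "expand Z = {#} \<longleftrightarrow> (\<forall>x\<in>#Z. block x = {#})"
    by (induction Z) (auto simp: expand_def)
  moreover have "block x \<noteq> {#}" if "x \<in># Z" for x
    using that assms block_LS blocks_S block_LT blocks_T by fastforce
  ultimately show ?thesis by (auto elim: multiset_nonemptyE)
qed

lemma expand_plus [simp]: "expand (Z + Z') = expand Z + expand Z'"
  and expand_empty [simp]: "expand {#} = {#}"
  by (simp_all add: expand_def)

lemma expand_sum_mset: "expand (sum_mset \<zeta>) = sum_mset (image_mset expand \<zeta>)"
  by (induction \<zeta>) auto

lemma expand_labels_of_blocks: "expand LS = S" "expand LT = T"
proof -
  have "expand (image_mset c \<rho>) = sum_mset \<rho>" if "set_mset \<rho> \<subseteq> set_mset (\<pi> + \<tau>)" for \<rho>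
    using that block_c by (induction \<rho>) (auto simp: expand_def)
  thus "expand LS = S" "expand LT = T"
    using partition_S partition_T by (auto simp: mem_mset_partitions)
qed

lemma label_eq_empty_iff [simp]: "label X = {#} \<longleftrightarrow> X = {#}"
  by (simp add: label_def)

lemma expand_label: "X = {#} \<or> X \<in># \<pi> + \<tau> \<Longrightarrow> expand (label X) = X"
  using blocks_S blocks_T by (auto simp: label_def expand_def block_c)

lemma label_expand: "R = {#} \<or> (\<exists>x. x \<in># LS + LT \<and> R = {#x#}) \<Longrightarrow> label (expand R) = R"
  using block_LS block_LT blocks_S blocks_T by (fastforce simp: label_def expand_def)

lemma image_mset_label: "image_mset label \<pi> = singletons LS" "image_mset label \<tau> = singletons LT"
  using blocks_S blocks_T by (auto simp: singletons_def label_def multiset.map_comp comp_def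
      intro!: image_mset_cong)

lemma image_mset_expand_singletons: "image_mset expand (singletons LS) = \<pi>" "image_mset expand (singletons LT) = \<tau>"
proof -
  have "image_mset expand (singletons (image_mset c \<rho>)) = \<rho>" if "set_mset \<rho> \<subseteq> set_mset (\<pi> + \<tau>)" for \<rho>
  proof -
    have "image_mset (\<lambda>X. block (c X)) \<rho> = image_mset id \<rho>"
      using that block_c by (intro image_mset_cong) auto
    thus ?thesis by (simp add: singletons_def multiset.map_comp comp_def expand_def)
  qed
  thus "image_mset expand (singletons LS) = \<pi>" "image_mset expand (singletons LT) = \<tau>"
    by auto
qed

lemma mtilde_singletons: "mtilde (singletons LS) = mtilde \<pi>" "mtilde (singletons LT) = mtilde \<tau>"
proof -
  have "inj_on (\<lambda>X. {#c X#}) (set_mset \<pi> \<union> set_mset \<tau>)"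
    using inj_c by (auto simp: inj_on_def)
  hence "mtilde (singletons (image_mset c \<rho>)) = mtilde \<rho>" if "set_mset \<rho> \<subseteq> set_mset (\<pi> + \<tau>)" for \<rho>
    using that by (auto simp: singletons_def multiset.map_comp comp_def
        intro!: mtilde_image_mset elim: inj_on_subset)
  thus "mtilde (singletons LS) = mtilde \<pi>" "mtilde (singletons LT) = mtilde \<tau>"
    by auto
qed

lemma expand_labels:
  assumes "\<theta> \<in> sharp S T \<pi> \<tau>" "C \<in># \<theta>"
  shows "expand (labels C) = C"
proof -
  note C = sharp_block[OF disjoint assms]
  have "expand (label (restr C (set_mset S))) = restr C (set_mset S)"
    and "expand (label (restr C (set_mset T))) = restr C (set_mset T)"
    using C(4,5) by (auto intro!: expand_label)
  thus ?thesis using C(3) by (simp add: labels_def)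
qed

lemma labels_expand:
  assumes "\<zeta> \<in> sharp LS LT (singletons LS) (singletons LT)" "Z \<in># \<zeta>"
  shows "labels (expand Z) = Z"
proof -
  note Z = sharp_block[OF disjoint_labels assms]
  have "label (expand (restr Z (set_mset LS))) = restr Z (set_mset LS)"
    and "label (expand (restr Z (set_mset LT))) = restr Z (set_mset LT)"
    using Z(4,5) by (auto simp: singletons_def intro!: label_expand)
  thus ?thesis using Z(2,3) by (simp add: labels_def restr_expand)
qed

lemma restr_labels:
  assumes "\<theta> \<in> sharp S T \<pi> \<tau>" "C \<in># \<theta>"
  shows "restr (labels C) (set_mset LS) = label (restr C (set_mset S))"
    and "restr (labels C) (set_mset LT) = label (restr C (set_mset T))"
    and "set_mset (labels C) \<subseteq> set_mset LS \<union> set_mset LT"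
proof -
  note C = sharp_block[OF disjoint assms]
  have "set_mset (label (restr C (set_mset S))) \<subseteq> set_mset LS"
    and "set_mset (label (restr C (set_mset T))) \<subseteq> set_mset LT"
    using C(4,5) by (auto simp: label_def)
  thus "restr (labels C) (set_mset LS) = label (restr C (set_mset S))"
    and "restr (labels C) (set_mset LT) = label (restr C (set_mset T))"
    and "set_mset (labels C) \<subseteq> set_mset LS \<union> set_mset LT"
    using disjoint_labels by (auto simp: labels_def restr_id restr_eq_empty_iff)
qed

lemma expand_in_sharp:
  assumes \<zeta>: "\<zeta> \<in> sharp LS LT (singletons LS) (singletons LT)"
  shows "image_mset expand \<zeta> \<in> sharp S T \<pi> \<tau>"
proof -
  note Z = sharp_block[OF disjoint_labels \<zeta>]
  have "sum_mset \<zeta> = LS + LT" "restr_part \<zeta> (set_mset LS) = singletons LS"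
    "restr_part \<zeta> (set_mset LT) = singletons LT"
    using \<zeta> by (simp_all add: sharp_def is_mset_partition_def)
  moreover have "restr_part (image_mset expand \<zeta>) (set_mset S) = image_mset expand (restr_part \<zeta> (set_mset LS))"
    and "restr_part (image_mset expand \<zeta>) (set_mset T) = image_mset expand (restr_part \<zeta> (set_mset LT))"
  proof -
    have restr_Z: "set_mset (restr Z U) \<subseteq> set_mset (LS + LT)" if "Z \<in># \<zeta>" for Z U
      using Z(2)[OF that] by (auto simp: set_mset_restr)
    show "restr_part (image_mset expand \<zeta>) (set_mset S) = image_mset expand (restr_part \<zeta> (set_mset LS))"
      and "restr_part (image_mset expand \<zeta>) (set_mset T) = image_mset expand (restr_part \<zeta> (set_mset LT))"
      using Z(2) by (auto intro!: restr_part_image_mset simp: restr_expand expand_eq_empty_iff[OF restr_Z])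
  qed
  moreover have "\<forall>C\<in>#image_mset expand \<zeta>. C \<noteq> {#}"
    using Z(1,2) expand_eq_empty_iff by auto
  ultimately show ?thesis
    by (simp add: sharp_def is_mset_partition_def flip: expand_sum_mset)
      (simp add: expand_labels_of_blocks image_mset_expand_singletons)
qed

lemma labels_in_sharp:
  assumes \<theta>: "\<theta> \<in> sharp S T \<pi> \<tau>"
  shows "image_mset labels \<theta> \<in> sharp LS LT (singletons LS) (singletons LT)"
proof -
  note C = sharp_block[OF disjoint \<theta>] and L = restr_labels[OF \<theta>]
  have "restr_part \<theta> (set_mset S) = \<pi>" "restr_part \<theta> (set_mset T) = \<tau>"
    using \<theta> by (simp_all add: sharp_def)
  hence LS: "restr_part (image_mset labels \<theta>) (set_mset LS) = singletons LS"
    and LT: "restr_part (image_mset labels \<theta>) (set_mset LT) = singletons LT"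
    using L(1,2) by (auto simp: restr_part_image_mset image_mset_label)
  have "set_mset (sum_mset (image_mset labels \<theta>)) \<subseteq> set_mset LS \<union> set_mset LT"
    using L(3) by force
  hence "sum_mset (image_mset labels \<theta>) = LS + LT"
    using restr_split[OF _ disjoint_labels] LS LT by (metis sum_mset_restr_part sum_mset_singletons)
  moreover have "\<forall>Z\<in>#image_mset labels \<theta>. Z \<noteq> {#}"
    using C(1,3) by (fastforce simp: labels_def)
  ultimately show ?thesis using LS LT by (simp add: sharp_def is_mset_partition_def)
qed

lemma sum_sharp_singletons_labels:
  "(\<Sum>\<zeta>\<in>sharp LS LT (singletons LS) (singletons LT). ht (mtilde \<zeta>)) = (\<Sum>\<theta>\<in>sharp S T \<pi> \<tau>. ht (mtilde \<theta>))"
proof -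
  have "bij_betw (image_mset expand) (sharp LS LT (singletons LS) (singletons LT)) (sharp S T \<pi> \<tau>)"
  proof (rule bij_betw_byWitness[where f'="image_mset labels"])
    show "\<forall>\<zeta>\<in>sharp LS LT (singletons LS) (singletons LT). image_mset labels (image_mset expand \<zeta>) = \<zeta>"
      using labels_expand by (auto simp: multiset.map_comp comp_def intro: image_mset_cong[where g=id, simplified])
    show "\<forall>\<theta>\<in>sharp S T \<pi> \<tau>. image_mset expand (image_mset labels \<theta>) = \<theta>"
      using expand_labels by (auto simp: multiset.map_comp comp_def intro: image_mset_cong[where g=id, simplified])
  qed (use expand_in_sharp labels_in_sharp in auto)
  moreover have "mtilde (image_mset expand \<zeta>) = mtilde \<zeta>"
    if "\<zeta> \<in> sharp LS LT (singletons LS) (singletons LT)" for \<zeta>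
    using labels_expand[OF that] by (intro mtilde_image_mset inj_onI) metis
  ultimately show ?thesis
    by (simp add: sum.reindex_bij_betw[symmetric])
qed

lemma htilde_product_from_smaller:
  assumes ht: "is_htilde ht"
    and smaller: "\<And>\<rho> \<kappa>. \<rho> \<in> mset_partitions LS \<Longrightarrow> \<kappa> \<in> mset_partitions LT
      \<Longrightarrow> (\<rho>, \<kappa>) \<noteq> (singletons LS, singletons LT)
      \<Longrightarrow> ht (mtilde \<rho>) * ht (mtilde \<kappa>) = (\<Sum>\<theta>\<in>sharp LS LT \<rho> \<kappa>. ht (mtilde \<theta>))"
  shows "ht (mtilde \<pi>) * ht (mtilde \<tau>) = (\<Sum>\<theta>\<in>sharp S T \<pi> \<tau>. ht (mtilde \<theta>))"
proof -
  let ?P = "mset_partitions LS \<times> mset_partitions LT"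
  let ?p = "(singletons LS, singletons LT)"
  define f :: "nat multiset multiset \<times> nat multiset multiset \<Rightarrow> sym"
    where "f = (\<lambda>(\<rho>, \<kappa>). ht (mtilde \<rho>) * ht (mtilde \<kappa>))"
  define g :: "nat multiset multiset \<times> nat multiset multiset \<Rightarrow> sym"
    where "g = (\<lambda>(\<rho>, \<kappa>). \<Sum>\<theta>\<in>sharp LS LT \<rho> \<kappa>. ht (mtilde \<theta>))"
  have "sum f ?P = htilde_sum ht LS * htilde_sum ht LT"
    by (simp add: f_def htilde_sum_def sum_product sum.cartesian_product)
  also have "\<dots> = sum g ?P"
    by (simp add: g_def htilde_sum_plus[OF ht disjoint_labels, symmetric]
        htilde_sum_plus_eq_sum_sharp[OF disjoint_labels])
  finally have "sum f ?P = sum g ?P" .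
  moreover have "finite ?P" "?p \<in> ?P"
    by (simp_all add: finite_mset_partitions singletons_in_mset_partitions)
  ultimately have "f ?p + sum f (?P - {?p}) = g ?p + sum g (?P - {?p})"
    by (metis sum.remove)
  moreover have "sum f (?P - {?p}) = sum g (?P - {?p})"
    using smaller by (intro sum.cong) (auto simp: f_def g_def)
  ultimately have "f ?p = g ?p" by simp
  thus ?thesis by (simp add: f_def g_def mtilde_singletons sum_sharp_singletons_labels)
qed

end

lemma obtain_block_labelling:
  assumes "set_mset S \<inter> set_mset T = {}" "\<pi> \<in> mset_partitions S" "\<tau> \<in> mset_partitions T"
  obtains c where "block_labelling S T \<pi> \<tau> c"
proof -
  obtain c :: "'a multiset \<Rightarrow> nat" where "inj_on c (set_mset \<pi> \<union> set_mset \<tau>)"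
    using finite_imp_inj_to_nat_seg[of "set_mset \<pi> \<union> set_mset \<tau>"] by blast
  with assms show ?thesis by (intro that) (unfold_locales)
qed

text \<open>The induction is carried out for multisets of naturals, where the labelled multisets
  LS and LT live whatever the type of S and T.\<close>

lemma htilde_product_nat:
  fixes X Y :: "nat multiset" and \<rho> \<kappa> :: "nat multiset multiset"
  assumes ht: "is_htilde ht"
  shows "set_mset X \<inter> set_mset Y = {} \<Longrightarrow> \<rho> \<in> mset_partitions X \<Longrightarrow> \<kappa> \<in> mset_partitions Y
    \<Longrightarrow> ht (mtilde \<rho>) * ht (mtilde \<kappa>) = (\<Sum>\<theta>\<in>sharp X Y \<rho> \<kappa>. ht (mtilde \<theta>))"
proof (induction "size \<rho> + size \<kappa>" arbitrary: X Y \<rho> \<kappa> rule: less_induct)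
  case less
  then obtain c where "block_labelling X Y \<rho> \<kappa> c"
    by (blast intro: obtain_block_labelling)
  then interpret block_labelling X Y \<rho> \<kappa> c .
  show ?case
  proof (rule htilde_product_from_smaller[OF ht])
    fix \<rho>' \<kappa>' assume \<rho>': "\<rho>' \<in> mset_partitions LS" and \<kappa>': "\<kappa>' \<in> mset_partitions LT"
      and "(\<rho>', \<kappa>') \<noteq> (singletons LS, singletons LT)"
    hence "\<not> (size \<rho>' = size LS \<and> size \<kappa>' = size LT)"
      using size_mset_partition_eq_imp_singletons[OF \<rho>'] size_mset_partition_eq_imp_singletons[OF \<kappa>']
      by auto
    moreover have "size \<rho>' \<le> size LS" "size \<kappa>' \<le> size LT"
      using size_mset_partition_le[OF \<rho>'] size_mset_partition_le[OF \<kappa>'] by simp_all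
    ultimately have "size \<rho>' + size \<kappa>' < size \<rho> + size \<kappa>"
      by auto
    thus "ht (mtilde \<rho>') * ht (mtilde \<kappa>') = (\<Sum>\<theta>\<in>sharp LS LT \<rho>' \<kappa>'. ht (mtilde \<theta>))"
      using \<rho>' \<kappa>' disjoint_labels by (intro less.hyps) auto
  qed
qed

theorem proposition21:
  fixes S T :: "'a multiset" and \<pi> \<tau> :: "'a multiset multiset"
    and ht :: "nat multiset \<Rightarrow> sym"
  assumes "is_htilde ht"
    and "set_mset S \<inter> set_mset T = {}"
    and "is_mset_partition \<pi> S"
    and "is_mset_partition \<tau> T"
  shows "ht (mtilde \<pi>) * ht (mtilde \<tau>) = (\<Sum>\<theta>\<in>sharp S T \<pi> \<tau>. ht (mtilde \<theta>))"
proof -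
  have "\<pi> \<in> mset_partitions S" "\<tau> \<in> mset_partitions T"
    using assms(3,4) by (simp_all add: mset_partitions_def)
  with assms(2) obtain c where "block_labelling S T \<pi> \<tau> c"
    by (rule obtain_block_labelling)
  then interpret block_labelling S T \<pi> \<tau> c .
  show ?thesis
    using htilde_product_nat[OF assms(1) disjoint_labels] by (rule htilde_product_from_smaller[OF assms(1)])
qed

end
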